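(* Let $X$ be a real topological vector space, $C\subseteq X$ convex and $x_0\in C$. Then $x_0\notin\operatorname{fri} C$ if and only if there exist $y\in C$ and a neighbourhood $V_y$ of $y$ such that for every $z\in V_y\cap C$ and every $\epsilon>0$ we have $x_0+\epsilon(x_0-z)\notin C$.
   Context: For a convex set $C$, a convex subset $F\subseteq C$ is a face of $C$ if for every $x\in F$ and all $y,z\in C$ with $x\in(y,z)=\{(1-t)y+tz:t\in(0,1)\}$ we have $y,z\in F$; $F_{\min}(x,C)$ is the intersection of all faces of $C$ containing $x\in C$. The face relative interior is $\operatorname{fri} C=\{x\in C: C\subseteq\overline{F_{\min}(x,C)}\}$. *)

theory Defs
  imports "HOL-Analysis.Analysis"
begin

text \<open>Real topological vector space: a real vector space with a topology making
addition and scalar multiplication jointly continuous w.r.t. the product topology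
(stated via basic open boxes; no separation axiom assumed).\<close>
class topological_real_vector = real_vector + topological_space +
  assumes tvs_continuous_add:
    "\<And>W x y. open W \<Longrightarrow> x + y \<in> W \<Longrightarrow>
       \<exists>A B. open A \<and> open B \<and> x \<in> A \<and> y \<in> B \<and> (\<forall>a\<in>A. \<forall>b\<in>B. a + b \<in> W)"
  assumes tvs_continuous_scaleR:
    "\<And>W (t::real) x. open W \<Longrightarrow> t *\<^sub>R x \<in> W \<Longrightarrow>
       \<exists>S B. open S \<and> open B \<and> t \<in> S \<and> x \<in> B \<and> (\<forall>s\<in>S. \<forall>b\<in>B. s *\<^sub>R b \<in> W)"

definition oseg :: "'a::real_vector \<Rightarrow> 'a \<Rightarrow> 'a set" where
  "oseg y z = {(1 - t) *\<^sub>R y + t *\<^sub>R z | t. 0 < t \<and> t < 1}"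

definition is_face :: "'a::real_vector set \<Rightarrow> 'a set \<Rightarrow> bool" where
  "is_face F C \<longleftrightarrow> convex F \<and> F \<subseteq> C \<and>
     (\<forall>x\<in>F. \<forall>y\<in>C. \<forall>z\<in>C. x \<in> oseg y z \<longrightarrow> y \<in> F \<and> z \<in> F)"

definition F_min :: "'a::real_vector \<Rightarrow> 'a set \<Rightarrow> 'a set" where
  "F_min x C = \<Inter> {F. is_face F C \<and> x \<in> F}"

definition fri :: "'a::{real_vector,topological_space} set \<Rightarrow> 'a set" where
  "fri C = {x \<in> C. C \<subseteq> closure (F_min x C)}"

end

theory Submission
  imports Defs
begin

text \<open>For convex \<open>C\<close> and \<open>x \<in> C\<close>, the minimal face \<open>F_min x C\<close> consists exactly of the points
  \<open>z \<in> C\<close> such that the segment from \<open>z\<close> to \<open>x\<close> can be prolonged a little beyond \<open>x\<close> inside \<open>C\<close>: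
  this set is a face (pushing \<open>x\<close> away from a point of an open segment also pushes it away from
  both endpoints), and every face through \<open>x\<close> contains it, since \<open>x\<close> lies in the open segment
  between \<open>z\<close> and the prolongation point. Hence \<open>x \<notin> fri C\<close> says that some \<open>y \<in> C\<close> lies outside
  the closure of this set, i.e. has a neighbourhood avoiding it, which is the stated condition.
  Only the topology of \<open>X\<close> enters, not the continuity of the vector operations.\<close>

definition prolongable_points :: "'a::real_vector \<Rightarrow> 'a set \<Rightarrow> 'a set" where
  "prolongable_points x C = {z \<in> C. \<exists>e>0. x + e *\<^sub>R (x - z) \<in> C}"

lemma oseg_commute: "oseg y z = oseg z y"
proof -
  have "oseg y z \<subseteq> oseg z y" for y z :: 'a
    unfolding oseg_def by clarify (rule_tac x = "1 - t" in exI, auto simp: algebra_simps)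
  then show ?thesis by blast
qed

lemma convex_prolongation_shrink:
  assumes "convex C" "x \<in> C" "x + e *\<^sub>R (x - z) \<in> C" "0 < d" "d \<le> e"
  shows "x + d *\<^sub>R (x - z) \<in> C"
proof -
  have "(1 - d/e) *\<^sub>R x + (d/e) *\<^sub>R (x + e *\<^sub>R (x - z)) \<in> C"
    using assms by (intro convexD_alt) auto
  moreover have "(1 - d/e) *\<^sub>R x + (d/e) *\<^sub>R (x + e *\<^sub>R (x - z)) = x + d *\<^sub>R (x - z)"
    using assms by (simp add: algebra_simps)
  ultimately show ?thesis by simp
qed

lemma prolongation_from_oseg_point:
  assumes "convex C" "z \<in> C" "u \<in> oseg y z" "e > 0" "x + e *\<^sub>R (x - u) \<in> C"
  shows "\<exists>d>0. x + d *\<^sub>R (x - y) \<in> C"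
proof -
  obtain t where t: "0 < t" "t < 1" and u: "u = (1 - t) *\<^sub>R y + t *\<^sub>R z"
    using assms(3) by (auto simp: oseg_def)
  define w where "w = x + e *\<^sub>R (x - u)"
  define k where "k = 1 + e * t"
  define d where "d = e * (1 - t) / k"
  have k: "k > 0" using assms(4) t by (simp add: k_def add_pos_pos)
  have d: "d > 0" using assms(4) t k by (simp add: d_def)
  have mem: "(1 - e*t/k) *\<^sub>R w + (e*t/k) *\<^sub>R z \<in> C"
    using assms t k by (intro convexD_alt) (auto simp: w_def k_def)
  \<comment> \<open>\<open>x + d(x - y)\<close> is the point of \<open>[w, z]\<close> where the \<open>z\<close>-contributions of \<open>u\<close> cancel\<close>
  have "k *\<^sub>R ((1 - e*t/k) *\<^sub>R w + (e*t/k) *\<^sub>R z) = w + (e*t) *\<^sub>R z"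
    using k by (simp add: scaleR_add_right k_def field_simps)
  also have "\<dots> = (1 + e) *\<^sub>R x - (e * (1 - t)) *\<^sub>R y"
    by (simp add: w_def u algebra_simps)
  also have "\<dots> = k *\<^sub>R x + (k * d) *\<^sub>R (x - y)"
  proof -
    have kd: "k * d = e * (1 - t)" using k by (simp add: d_def)
    show ?thesis unfolding kd by (simp add: k_def algebra_simps)
  qed
  also have "\<dots> = k *\<^sub>R (x + d *\<^sub>R (x - y))"
    by (simp add: scaleR_add_right)
  finally have "x + d *\<^sub>R (x - y) = (1 - e*t/k) *\<^sub>R w + (e*t/k) *\<^sub>R z"
    using k by simp
  then show ?thesis using mem d by auto
qed

lemma convex_prolongable_points:
  assumes C: "convex C" and x: "x \<in> C"
  shows "convex (prolongable_points x C)"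
proof (rule convexI)
  fix a b :: 'a and u v :: real
  assume ab: "a \<in> prolongable_points x C" "b \<in> prolongable_points x C"
    and uv: "0 \<le> u" "0 \<le> v" "u + v = 1"
  obtain e1 e2 where e: "e1 > 0" "e2 > 0" "x + e1 *\<^sub>R (x - a) \<in> C" "x + e2 *\<^sub>R (x - b) \<in> C"
    and abC: "a \<in> C" "b \<in> C"
    using ab by (auto simp: prolongable_points_def)
  define e where "e = min e1 e2"
  have e0: "e > 0" using e by (simp add: e_def)
  have "x + e *\<^sub>R (x - a) \<in> C" "x + e *\<^sub>R (x - b) \<in> C"
    using convex_prolongation_shrink[OF C x e(3) e0] convex_prolongation_shrink[OF C x e(4) e0]
    by (simp_all add: e_def)
  then have "u *\<^sub>R (x + e *\<^sub>R (x - a)) + v *\<^sub>R (x + e *\<^sub>R (x - b)) \<in> C"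
    using C uv by (simp add: convexD)
  moreover have "u *\<^sub>R (x + e *\<^sub>R (x - a)) + v *\<^sub>R (x + e *\<^sub>R (x - b))
      = x + e *\<^sub>R (x - (u *\<^sub>R a + v *\<^sub>R b))"
  proof -
    have "u *\<^sub>R (x + e *\<^sub>R (x - a)) + v *\<^sub>R (x + e *\<^sub>R (x - b))
        = (u + v) *\<^sub>R x + e *\<^sub>R ((u + v) *\<^sub>R x - (u *\<^sub>R a + v *\<^sub>R b))"
      by (simp add: algebra_simps)
    then show ?thesis using uv by simp
  qed
  moreover have "u *\<^sub>R a + v *\<^sub>R b \<in> C" using C abC uv by (simp add: convexD)
  ultimately show "u *\<^sub>R a + v *\<^sub>R b \<in> prolongable_points x C"
    using e0 by (auto simp: prolongable_points_def)
qed

lemma is_face_prolongable_points: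
  assumes C: "convex C" and x: "x \<in> C"
  shows "is_face (prolongable_points x C) C"
  unfolding is_face_def
proof (intro conjI ballI impI)
  show "convex (prolongable_points x C)" using convex_prolongable_points[OF C x] .
  show "prolongable_points x C \<subseteq> C" by (auto simp: prolongable_points_def)
next
  fix u y z assume u: "u \<in> prolongable_points x C" and yC: "y \<in> C" and zC: "z \<in> C"
    and uyz: "u \<in> oseg y z"
  obtain e where e: "e > 0" "x + e *\<^sub>R (x - u) \<in> C"
    using u by (auto simp: prolongable_points_def)
  show "y \<in> prolongable_points x C"
    using prolongation_from_oseg_point[OF C zC uyz e] yC by (simp add: prolongable_points_def)
  show "z \<in> prolongable_points x C"
    using prolongation_from_oseg_point[OF C yC _ e] uyz yC zC
    by (simp add: prolongable_points_def oseg_commute)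
qed

lemma mem_oseg_prolongation:
  assumes "e > 0"
  shows "x \<in> oseg z (x + e *\<^sub>R (x - z))"
  unfolding oseg_def
proof (intro CollectI exI conjI)
  show "0 < 1 / (1 + e)" "1 / (1 + e) < 1" using assms by auto
  have "(1 + e) *\<^sub>R ((1 - 1 / (1 + e)) *\<^sub>R z + (1 / (1 + e)) *\<^sub>R (x + e *\<^sub>R (x - z)))
      = (1 + e) *\<^sub>R x"
    using assms by (simp add: algebra_simps divide_simps)
  then show "x = (1 - 1 / (1 + e)) *\<^sub>R z + (1 / (1 + e)) *\<^sub>R (x + e *\<^sub>R (x - z))"
    using assms by simp
qed

lemma F_min_eq_prolongable_points:
  assumes C: "convex C" and x: "x \<in> C"
  shows "F_min x C = prolongable_points x C"
proof
  have "x \<in> prolongable_points x C" using x by (auto simp: prolongable_points_def intro: exI[of _ 1])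
  then show "F_min x C \<subseteq> prolongable_points x C"
    using is_face_prolongable_points[OF C x] unfolding F_min_def by blast
next
  show "prolongable_points x C \<subseteq> F_min x C"
    unfolding F_min_def
  proof (intro Inter_greatest subsetI, clarify)
    fix z F assume z: "z \<in> prolongable_points x C" and F: "is_face F C" and xF: "x \<in> F"
    then obtain e where "e > 0" "x + e *\<^sub>R (x - z) \<in> C" "z \<in> C"
      by (auto simp: prolongable_points_def)
    then show "z \<in> F"
      using F xF mem_oseg_prolongation[of e x z] unfolding is_face_def by blast
  qed
qed

theorem theorem4p7:
  fixes C :: "'a::topological_real_vector set" and x0 :: 'a
  assumes "convex C" and "x0 \<in> C"
  shows "x0 \<notin> fri C \<longleftrightarrow>
    (\<exists>y\<in>C. \<exists>V. (\<exists>U. open U \<and> y \<in> U \<and> U \<subseteq> V) \<and>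
       (\<forall>z\<in>V \<inter> C. \<forall>\<epsilon>>0. x0 + \<epsilon> *\<^sub>R (x0 - z) \<notin> C))" (is "_ \<longleftrightarrow> ?R")
proof -
  have "x0 \<notin> fri C \<longleftrightarrow> (\<exists>y\<in>C. y \<notin> closure (prolongable_points x0 C))"
    using assms by (auto simp: fri_def F_min_eq_prolongable_points)
  also have "\<dots> \<longleftrightarrow>
      (\<exists>y\<in>C. \<exists>V. (\<exists>U. open U \<and> y \<in> U \<and> U \<subseteq> V) \<and> prolongable_points x0 C \<inter> V = {})"
    unfolding closure_iff_nhds_not_empty by blast
  also have "\<dots> \<longleftrightarrow> ?R"
    unfolding prolongable_points_def by (intro bex_cong refl ex_cong1) blast
  finally show ?thesis .
qed

end
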